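(* For $\tau$ in the upper half-plane, the functions $x=v^2(\tau)$ and $y=v^2(2\tau)$ satisfy $y^2-(x^2-4x+1)y+x^2=0$.
   Context: $q=e^{2\pi i\tau}$, $q^{1/2}=e^{\pi i\tau}$, and $v(\tau)=q^{1/2}\prod_{n\ge1}(1-q^n)^{\left(\frac{8}{n}\right)}$, where $\left(\frac{8}{n}\right)$ is the Kronecker symbol. *)

theory Defs
  imports "HOL-Analysis.Analysis"
begin

definition kronecker8 :: "nat \<Rightarrow> int" where
  "kronecker8 n = (if n mod 8 = 1 \<or> n mod 8 = 7 then 1
                   else if n mod 8 = 3 \<or> n mod 8 = 5 then -1 else 0)"

text \<open>q = exp(2 pi i tau), q^(1/2) = exp(pi i tau).\<close>
definition nome :: "complex \<Rightarrow> complex" where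
  "nome \<tau> = exp (2 * pi * \<i> * \<tau>)"

definition v_fun :: "complex \<Rightarrow> complex" where
  "v_fun \<tau> = exp (pi * \<i> * \<tau>) *
     (\<Prod>n. (1 - nome \<tau> ^ Suc n) powi kronecker8 (Suc n))"

end

theory Submission
  imports Defs "HOL-Computational_Algebra.Polynomial"
begin

text \<open>Write \<open>P(q) = \<Prod>(1 - q\<^sup>n)\<^bsup>(8/n)\<^esup>\<close>, so that \<open>v(\<tau>)\<^sup>2 = q P(q)\<^sup>2\<close> and, because
  \<open>(8/n)\<close> vanishes for even \<open>n\<close>, \<open>v(2\<tau>)\<^sup>2 = q\<^sup>2 P(q)\<^sup>2 P(-q)\<^sup>2\<close>.
  By the Jacobi triple product, \<open>P = \<theta>\<^sub>3 / \<theta>\<^sub>1\<close> with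
  \<open>\<theta>\<^sub>b(q) = \<Sum>\<^sub>j (-1)\<^sup>j q\<^bsup>4j\<^sup>2 - bj\<^esup>\<close>, and also
  \<open>\<theta>'(q) \<phi>(q\<^sup>8)\<^sup>2 = \<theta>\<^sub>3(q) \<theta>\<^sub>1(q) \<phi>(q\<^sup>4)\<close> for \<open>\<theta>'(q) = \<Sum>\<^sub>j (-1)\<^sup>j q\<^bsup>2j\<^sup>2 - j\<^esup>\<close> and
  Euler's function \<open>\<phi>\<close>. Rearranging a product of two theta series gives
  \<open>\<theta>\<^sub>1\<^sup>2 - q \<theta>\<^sub>3\<^sup>2 = \<theta>' \<Sum>\<^sub>j q\<^bsup>2j\<^sup>2\<^esup>\<close>. Together,
  \<open>1/P(q) - q P(q) = \<Sum>\<^sub>j q\<^bsup>2j\<^sup>2\<^esup> \<phi>(q\<^sup>4) / \<phi>(q\<^sup>8)\<^sup>2\<close> is even in \<open>q\<close>, hence equals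
  \<open>1/P(-q) + q P(-q)\<close>; this relation between \<open>P(q)\<close> and \<open>P(-q)\<close> is a factor of the
  modular equation.\<close>

text \<open>Both \<^theory>\<open>HOL-Analysis.Infinite_Sum\<close> and \<^theory>\<open>HOL-Analysis.Infinite_Set_Sum\<close>
  declare this syntax; the series below are \<^const>\<open>infsetsum\<close>s.\<close>
no_notation Infinite_Sum.abs_summable_on (infixr "abs'_summable'_on" 46)

section \<open>Products of factors $1 - w^k$\<close>

lemma one_minus_power_nonzero:
  fixes w :: complex
  assumes "norm w < 1" and "0 < k"
  shows "1 - w ^ k \<noteq> 0"
proof
  assume "1 - w ^ k = 0"
  then have "norm w ^ k = 1" by (metis norm_one norm_power right_minus_eq)
  moreover have "norm w ^ k < 1" using assms by (simp add: power_less_one_iff)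
  ultimately show False by simp
qed

lemma LIMSEQ_prod_lessThan_prodinf:
  fixes f :: "nat \<Rightarrow> 'a::real_normed_field"
  assumes "convergent_prod f"
  shows "(\<lambda>n. \<Prod>i<n. f i) \<longlonglongrightarrow> prodinf f"
  using convergent_prod_LIMSEQ[OF assms] LIMSEQ_lessThan_iff_atMost by blast

lemma LIMSEQ_mult_index:
  assumes "X \<longlonglongrightarrow> L" and "0 < k"
  shows "(\<lambda>m. X (k * m)) \<longlonglongrightarrow> L"
  using LIMSEQ_subseq_LIMSEQ[OF assms(1), of "\<lambda>m. k * m"] assms(2)
  by (simp add: strict_mono_def o_def)

lemma convergent_prod_one_minus_power:
  fixes w :: complex
  assumes w: "norm w < 1" and e: "\<And>n. n < e n"
  shows "convergent_prod (\<lambda>n. 1 - w ^ e n)"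
proof -
  have "summable (\<lambda>n. norm w ^ n)" using w by simp
  moreover have "norm (norm (1 - w ^ e n - 1)) \<le> norm w ^ n" for n
    using w e[of n] by (simp add: norm_power power_decreasing)
  ultimately have "summable (\<lambda>n. norm (1 - w ^ e n - 1))"
    by (rule summable_comparison_test'[where N = 0])
  then show ?thesis
    by (intro abs_convergent_prod_imp_convergent_prod summable_imp_abs_convergent_prod)
qed

lemma prodinf_one_minus_power_nonzero:
  fixes w :: complex
  assumes "norm w < 1" and "\<And>n. n < e n"
  shows "(\<Prod>n. 1 - w ^ e n) \<noteq> 0"
proof (rule prodinf_nonzero[OF convergent_prod_one_minus_power[OF assms]])
  show "1 - w ^ e n \<noteq> 0" for n
    using assms by (intro one_minus_power_nonzero) (auto intro: le_less_trans)
qed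

lemma LIMSEQ_prod_one_minus_power_mult:
  fixes w :: complex
  assumes "norm w < 1" and "0 < k"
  shows "(\<lambda>m. \<Prod>i<m. 1 - w ^ (k * Suc i)) \<longlonglongrightarrow> (\<Prod>i. 1 - w ^ (k * Suc i))"
proof (intro LIMSEQ_prod_lessThan_prodinf convergent_prod_one_minus_power assms)
  show "i < k * Suc i" for i using assms(2) by (cases k) auto
qed

lemma norm_one_minus_powi_minus_one_le:
  fixes u :: complex and k :: int
  assumes u: "norm u \<le> r" and r: "r < 1" and k: "\<bar>k\<bar> \<le> 1"
  shows "norm ((1 - u) powi k - 1) \<le> norm u / (1 - r)"
proof -
  have d: "1 - r \<le> norm (1 - u)"
    using norm_triangle_ineq2[of 1 u] u by (simp add: norm_minus_commute)
  have "0 \<le> r" using u norm_ge_zero order_trans by blast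
  then have bound: "norm u \<le> norm u / (1 - r)"
    using r by (simp add: le_divide_eq mult_left_le)
  consider "k = 1" | "k = 0" | "k = -1" using k by linarith
  then show ?thesis
  proof cases
    case 3
    have "1 - u \<noteq> 0" using d r by auto
    then have "(1 - u) powi k - 1 = u / (1 - u)" by (simp add: 3 power_int_minus field_simps)
    then have "norm ((1 - u) powi k - 1) = norm u / norm (1 - u)" by (simp only: norm_divide)
    also have "\<dots> \<le> norm u / (1 - r)"
      using d r by (intro divide_left_mono mult_pos_pos) auto
    finally show ?thesis .
  qed (use bound r in auto)
qed

lemma convergent_prod_one_minus_power_powi:
  fixes w :: complex
  assumes w: "norm w < 1" and k: "\<And>n. \<bar>k n\<bar> \<le> 1"
  shows "convergent_prod (\<lambda>n. (1 - w ^ Suc n) powi k n)"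
proof -
  have bound: "norm ((1 - w ^ Suc n) powi k n - 1) \<le> norm w ^ Suc n / (1 - norm w)" for n
  proof -
    have "norm (w ^ Suc n) \<le> norm w ^ 1"
      unfolding norm_power using w by (intro power_decreasing) auto
    then have "norm ((1 - w ^ Suc n) powi k n - 1) \<le> norm (w ^ Suc n) / (1 - norm w)"
      by (intro norm_one_minus_powi_minus_one_le w k) simp
    then show ?thesis by (simp only: norm_power)
  qed
  have "summable (\<lambda>n. norm w ^ Suc n / (1 - norm w))"
    using w by (intro summable_divide summable_Suc_iff[THEN iffD2]) simp
  then have "summable (\<lambda>n. norm ((1 - w ^ Suc n) powi k n - 1))"
    by (rule summable_comparison_test'[where N = 0]) (simp add: bound del: power_Suc)
  then show ?thesis
    by (intro abs_convergent_prod_imp_convergent_prod summable_imp_abs_convergent_prod)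
qed

lemma LIMSEQ_nonzero_imp_norm_bounded_below:
  fixes a :: "nat \<Rightarrow> 'a::real_normed_field"
  assumes "\<And>n. a n \<noteq> 0" and "a \<longlonglongrightarrow> L" and "L \<noteq> 0"
  obtains c where "c > 0" and "\<And>n. c \<le> norm (a n)"
proof -
  have "Bseq (\<lambda>n. inverse (a n))"
    using tendsto_inverse[OF assms(2,3)] by (intro convergent_imp_Bseq convergentI)
  then obtain K where K: "K > 0" "\<And>n. norm (inverse (a n)) \<le> K" by (auto simp: Bseq_def)
  have "inverse K \<le> norm (a n)" for n
  proof -
    have "inverse (norm (a n)) \<le> K" using K(2)[of n] by (simp add: norm_inverse)
    then show ?thesis
      using assms(1)[of n] le_imp_inverse_le[of "inverse (norm (a n))" K] by simp
  qed
  with K(1) show ?thesis by (intro that[of "inverse K"]) auto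
qed

lemma prod_lessThan_double:
  fixes f :: "nat \<Rightarrow> 'a::comm_monoid_mult"
  shows "(\<Prod>k<2*n. f k) = (\<Prod>i<n. f (n + i) * f (n - Suc i))"
proof -
  have "(\<Prod>k<2*n. f k) = (\<Prod>k<n. f k) * (\<Prod>k\<in>{n..<2*n}. f k)"
    using prod.atLeastLessThan_concat[of 0 n "2*n" f] by (simp add: atLeast0LessThan)
  also have "(\<Prod>k\<in>{n..<2*n}. f k) = (\<Prod>i<n. f (n + i))"
    by (simp add: prod.atLeastLessThan_shift_0 atLeast0LessThan o_def)
  also have "(\<Prod>k<n. f k) = (\<Prod>i<n. f (n - Suc i))"
    by (rule prod.nat_diff_reindex[symmetric])
  finally show ?thesis by (simp add: prod.distrib mult.commute)
qed

lemma prod_lessThan_mult_blocks: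
  fixes f :: "nat \<Rightarrow> 'a::comm_monoid_mult"
  shows "(\<Prod>n<k*m. f n) = (\<Prod>i<m. \<Prod>r<k. f (k*i + r))"
proof (induction m)
  case (Suc m)
  have "(\<Prod>n<k * Suc m. f n) = (\<Prod>n<k*m. f n) * (\<Prod>n\<in>{k*m..<k * Suc m}. f n)"
    using prod.atLeastLessThan_concat[of 0 "k*m" "k * Suc m" f] by (simp add: atLeast0LessThan)
  also have "(\<Prod>n\<in>{k*m..<k * Suc m}. f n) = (\<Prod>r<k. f (k*m + r))"
    by (simp add: prod.atLeastLessThan_shift_0 atLeast0LessThan o_def)
  finally show ?case by (simp only: Suc.IH prod.lessThan_Suc)
qed simp

section \<open>Gaussian binomial coefficients\<close>

definition q_pochhammer :: "'a::comm_ring_1 \<Rightarrow> nat \<Rightarrow> 'a" where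
  "q_pochhammer q n = (\<Prod>i<n. 1 - q ^ Suc i)"

text \<open>Junk value 0 for \<open>k > n\<close>, so that the Pascal rule below holds for all \<open>k\<close>.\<close>
definition gauss_binomial :: "'a::field \<Rightarrow> nat \<Rightarrow> nat \<Rightarrow> 'a" where
  "gauss_binomial q n k =
     (if k \<le> n then q_pochhammer q n / (q_pochhammer q k * q_pochhammer q (n - k)) else 0)"

lemma q_pochhammer_0 [simp]: "q_pochhammer q 0 = 1"
  by (simp add: q_pochhammer_def)

lemma q_pochhammer_Suc: "q_pochhammer q (Suc n) = q_pochhammer q n * (1 - q ^ Suc n)"
  by (simp add: q_pochhammer_def)

lemma gauss_binomial_pascal:
  assumes nz: "\<And>n. q_pochhammer q n \<noteq> 0"
  shows "gauss_binomial q (Suc n) (Suc k) = gauss_binomial q n (Suc k) + q ^ (n - k) * gauss_binomial q n k"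
proof -
  consider "k < n" | "k = n" | "n < k" by linarith
  then show ?thesis
  proof cases
    case 1
    then obtain m where n: "n = Suc (k + m)" using less_imp_Suc_add by blast
    define P where "P = q_pochhammer q"
    define a where "a = 1 - q ^ Suc k"
    define b where "b = 1 - q ^ Suc m"
    define Q where "Q = q ^ Suc m"
    have nzP: "P i \<noteq> 0" for i using nz by (simp add: P_def)
    have "a \<noteq> 0" "b \<noteq> 0"
      using nzP[of "Suc k"] nzP[of "Suc m"] by (auto simp: P_def a_def b_def q_pochhammer_Suc)
    have "1 - q ^ Suc n = b + Q * a"
      unfolding n a_def b_def Q_def by (simp add: algebra_simps power_add)
    then have "gauss_binomial q (Suc n) (Suc k) = P n * (b + Q * a) / (P k * a * (P m * b))"
      by (simp add: gauss_binomial_def n q_pochhammer_Suc P_def a_def b_def)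
    moreover have "gauss_binomial q n (Suc k) = P n / (P k * a * P m)"
      and "gauss_binomial q n k = P n / (P k * (P m * b))"
      and "q ^ (n - k) = Q"
      by (simp_all add: gauss_binomial_def n q_pochhammer_Suc P_def a_def b_def Q_def Suc_diff_le)
    moreover have "P n * (b + Q * a) / (P k * a * (P m * b))
        = P n / (P k * a * P m) + Q * (P n / (P k * (P m * b)))"
      using \<open>a \<noteq> 0\<close> \<open>b \<noteq> 0\<close> nzP[of k] nzP[of m] by (simp add: field_simps)
    ultimately show ?thesis by simp
  qed (use nz in \<open>auto simp: gauss_binomial_def\<close>)
qed

lemma coeff_prod_linear_q_powers:
  assumes nz: "\<And>n. q_pochhammer q n \<noteq> 0"
  shows "coeff (\<Prod>i<n. [:1, q ^ i:]) k = q ^ (k choose 2) * gauss_binomial q n k"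
proof (induction n arbitrary: k)
  case 0
  then show ?case by (cases k) (simp_all add: gauss_binomial_def numeral_2_eq_2)
next
  case (Suc n)
  show ?case
  proof (cases k)
    case 0
    then show ?thesis
      using Suc.IH nz by (simp add: prod.lessThan_Suc gauss_binomial_def mult_pCons_right numeral_2_eq_2)
  next
    case (Suc j)
    have "q ^ n * (q ^ (j choose 2) * gauss_binomial q n j)
        = q ^ (Suc j choose 2) * (q ^ (n - j) * gauss_binomial q n j)"
    proof (cases "j \<le> n")
      case True
      then have "n + (j choose 2) = (Suc j choose 2) + (n - j)"
        by (simp add: numeral_2_eq_2)
      then show ?thesis by (metis mult.assoc power_add)
    qed (simp add: gauss_binomial_def)
    then show ?thesis
      using Suc.IH by (simp add: Suc prod.lessThan_Suc mult_pCons_right gauss_binomial_pascal[OF nz] algebra_simps)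
  qed
qed

lemma q_binomial_theorem:
  assumes "\<And>n. q_pochhammer q n \<noteq> 0"
  shows "(\<Prod>i<n. 1 + q ^ i * w) = (\<Sum>k\<le>n. q ^ (k choose 2) * gauss_binomial q n k * w ^ k)"
proof -
  let ?p = "\<Prod>i<n. [:1, q ^ i:]"
  have "degree ?p \<le> (\<Sum>i<n. degree [:1, q ^ i:])"
    using degree_prod_sum_le[of "{..<n}" "\<lambda>i. [:1, q ^ i:]"] by (simp add: o_def)
  also have "\<dots> \<le> n"
    using sum_mono[of "{..<n}" "\<lambda>i. degree [:1, q ^ i:]" "\<lambda>_. 1"] by simp
  finally have "degree ?p \<le> n" .
  then have "poly ?p w = poly (\<Sum>k\<le>n. monom (coeff ?p k) k) w"
    by (simp only: poly_as_sum_of_monoms')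
  then have "poly ?p w = (\<Sum>k\<le>n. coeff ?p k * w ^ k)"
    by (simp add: poly_sum poly_monom)
  then show ?thesis
    by (simp add: poly_prod coeff_prod_linear_q_powers[OF assms] algebra_simps)
qed

lemma q_pochhammer_nonzero:
  fixes q :: complex
  assumes "norm q < 1"
  shows "q_pochhammer q n \<noteq> 0"
proof -
  have "1 - q ^ Suc i \<noteq> 0" for i by (rule one_minus_power_nonzero[OF assms]) simp
  then show ?thesis by (simp add: q_pochhammer_def)
qed

lemma q_pochhammer_tendsto:
  fixes q :: complex
  assumes "norm q < 1"
  shows "q_pochhammer q \<longlonglongrightarrow> (\<Prod>i. 1 - q ^ Suc i)" and "(\<Prod>i. 1 - q ^ Suc i) \<noteq> 0"
  using LIMSEQ_prod_lessThan_prodinf[OF convergent_prod_one_minus_power[OF assms, of Suc]]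
    prodinf_one_minus_power_nonzero[OF assms, of Suc]
  by (simp_all add: q_pochhammer_def[abs_def])

lemma q_pochhammer_times_gauss_binomial_bounded:
  fixes q :: complex
  assumes "norm q < 1"
  obtains K where "\<And>n m k. norm (q_pochhammer q n * gauss_binomial q m k) \<le> K"
proof -
  obtain c where c: "c > 0" "\<And>n. c \<le> norm (q_pochhammer q n)"
    using LIMSEQ_nonzero_imp_norm_bounded_below[OF q_pochhammer_nonzero q_pochhammer_tendsto]
      assms by metis
  obtain C where C: "\<And>n. norm (q_pochhammer q n) \<le> C"
    using convergent_imp_Bseq[OF convergentI[OF q_pochhammer_tendsto(1)[OF assms]]]
    by (auto simp: Bseq_def)
  have "0 \<le> C" using C[of 0] norm_ge_zero order_trans by blast
  have "norm (q_pochhammer q n * gauss_binomial q m k) \<le> C * (C / (c * c))" for n m k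
  proof -
    have "norm (gauss_binomial q m k) \<le> C / (c * c)"
      using C c \<open>0 \<le> C\<close> by (auto simp: gauss_binomial_def norm_mult norm_divide
          intro!: frac_le mult_mono order_trans[OF _ C(1)] mult_pos_pos)
    then show ?thesis
      unfolding norm_mult using C c \<open>0 \<le> C\<close> by (intro mult_mono) auto
  qed
  then show ?thesis by (rule that)
qed

lemma q_pochhammer_times_gauss_binomial_tendsto:
  fixes q :: complex
  assumes "norm q < 1"
  shows "(\<lambda>n. q_pochhammer q n * gauss_binomial q (2*n) (nat (int n + j))) \<longlonglongrightarrow> 1"
proof -
  define E where "E = (\<Prod>i. 1 - q ^ Suc i)"
  have E: "q_pochhammer q \<longlonglongrightarrow> E" "E \<noteq> 0"
    using q_pochhammer_tendsto[OF assms] by (simp_all add: E_def)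
  have at_top: "filterlim f sequentially sequentially" if "\<And>n. n - nat \<bar>j\<bar> \<le> f n" for f
    by (rule filterlim_at_top_mono[OF filterlim_minus_const_nat_at_top[of "nat \<bar>j\<bar>"]])
      (use that in auto)
  have "(\<lambda>n. q_pochhammer q n * q_pochhammer q (2*n)
             / (q_pochhammer q (nat (int n + j)) * q_pochhammer q (nat (int n - j))))
        \<longlonglongrightarrow> E * E / (E * E)"
    by (intro tendsto_intros E filterlim_compose[OF E(1)] at_top) (use E in auto)
  moreover have "\<forall>\<^sub>F n in sequentially.
      q_pochhammer q n * q_pochhammer q (2*n)
        / (q_pochhammer q (nat (int n + j)) * q_pochhammer q (nat (int n - j)))
      = q_pochhammer q n * gauss_binomial q (2*n) (nat (int n + j))"
    unfolding eventually_sequentially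
  proof (intro exI[of _ "nat \<bar>j\<bar>"] allI impI)
    fix n assume "nat \<bar>j\<bar> \<le> n"
    then have "nat (int n + j) \<le> 2*n" and "2*n - nat (int n + j) = nat (int n - j)" by auto
    then show "q_pochhammer q n * q_pochhammer q (2*n)
        / (q_pochhammer q (nat (int n + j)) * q_pochhammer q (nat (int n - j)))
      = q_pochhammer q n * gauss_binomial q (2*n) (nat (int n + j))"
      by (simp add: gauss_binomial_def)
  qed
  ultimately show ?thesis using E(2) by (simp add: Lim_transform_eventually)
qed

section \<open>The Jacobi triple product\<close>

lemma prod_odd_powers_divide:
  fixes x z :: "'a::field"
  shows "(\<Prod>i<n. x ^ (2*i+1) / z) = x ^ (n^2) / z ^ n"
proof (induction n)
  case (Suc n)
  have "(\<Prod>i<Suc n. x ^ (2*i+1) / z) = x ^ (n^2) * x ^ (2*n+1) / (z ^ n * z)"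
    unfolding prod.lessThan_Suc Suc.IH by (simp add: times_divide_times_eq)
  also have "x ^ (n^2) * x ^ (2*n+1) = x ^ (Suc n)^2"
  proof -
    have "n^2 + (2*n+1) = (Suc n)^2" by (simp add: power2_eq_square)
    then show ?thesis by (metis power_add)
  qed
  finally show ?case by (simp add: mult.commute)
qed simp

lemma prod_one_plus_odd_powers_symmetric:
  fixes x z :: complex
  assumes x: "x \<noteq> 0" and z: "z \<noteq> 0"
  shows "(\<Prod>i<n. (1 + z * x ^ (2*i+1)) * (1 + x ^ (2*i+1) / z))
       = x ^ (n^2) / z ^ n * (\<Prod>k<2*n. 1 + z * x powi (2 * int k + 1 - 2 * int n))"
proof -
  have factor: "(1 + z * x ^ (2*i+1)) * (1 + x ^ (2*i+1) / z)
      = x ^ (2*i+1) / z * ((1 + z * x powi (2 * int (n + i) + 1 - 2 * int n))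
          * (1 + z * x powi (2 * int (n - Suc i) + 1 - 2 * int n)))" if "i < n" for i
  proof -
    have e1: "2 * int (n + i) + 1 - 2 * int n = int (2*i+1)"
      and e2: "2 * int (n - Suc i) + 1 - 2 * int n = - int (2*i+1)"
      using that by (simp_all add: of_nat_diff)
    show ?thesis
      unfolding e1 e2 power_int_minus power_int_of_nat using x z by (simp add: field_simps)
  qed
  have "(\<Prod>i<n. (1 + z * x ^ (2*i+1)) * (1 + x ^ (2*i+1) / z))
      = (\<Prod>i<n. x ^ (2*i+1) / z * ((1 + z * x powi (2 * int (n + i) + 1 - 2 * int n))
          * (1 + z * x powi (2 * int (n - Suc i) + 1 - 2 * int n))))"
    by (intro prod.cong refl factor) simp
  then show ?thesis by (simp only: prod.distrib prod_odd_powers_divide prod_lessThan_double)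
qed

lemma q_binomial_term_shift:
  fixes x z :: complex
  assumes x: "x \<noteq> 0" and z: "z \<noteq> 0"
  shows "x ^ (n^2) / z ^ n * ((x^2) ^ (k choose 2) * (z * x powi (1 - 2 * int n)) ^ k)
       = x powi ((int k - int n)^2) * z powi (int k - int n)"
proof -
  have xpowi_add: "x powi a * x powi b = x powi (a + b)" for a b
    using x by (simp add: power_int_add)
  have "int (k choose 2) * 2 = int k * (int k - 1)"
    by (induction k) (simp_all add: numeral_2_eq_2 algebra_simps)
  then have A: "(x^2) ^ (k choose 2) = x powi (int k * (int k - 1))"
    by (metis (no_types) mult.commute of_nat_mult of_nat_numeral power_int_of_nat power_mult)
  have B: "(z * x powi (1 - 2 * int n)) ^ k = z powi int k * x powi ((1 - 2 * int n) * int k)"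
    by (simp add: power_mult_distrib power_int_power')
  have C: "x ^ (n^2) / z ^ n = x powi (int n ^ 2) * z powi (- int n)"
    by (metis divide_inverse of_nat_power power_int_minus power_int_of_nat)
  have D: "z powi (- int n) * z powi int k = z powi (int k - int n)"
    using power_int_add[OF disjI1[OF z], of "- int n" "int k"] by simp
  have E: "int n ^ 2 + int k * (int k - 1) + (1 - 2 * int n) * int k = (int k - int n)^2"
    by (simp add: power2_eq_square algebra_simps)
  have "x ^ (n^2) / z ^ n * ((x^2) ^ (k choose 2) * (z * x powi (1 - 2 * int n)) ^ k)
      = (x powi (int n ^ 2) * x powi (int k * (int k - 1)) * x powi ((1 - 2 * int n) * int k))
        * (z powi (- int n) * z powi int k)"
    unfolding A B C by (simp only: mult_ac)
  then show ?thesis unfolding xpowi_add D E .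
qed

lemma finite_jacobi_triple_product:
  fixes x z :: complex
  assumes x: "x \<noteq> 0" and z: "z \<noteq> 0" and nz: "\<And>n. q_pochhammer (x^2) n \<noteq> 0"
  shows "(\<Prod>i<n. (1 + z * x ^ (2*i+1)) * (1 + x ^ (2*i+1) / z))
       = (\<Sum>j=-int n..int n. gauss_binomial (x^2) (2*n) (nat (j + int n)) * x powi (j^2) * z powi j)"
proof -
  txt \<open>The q-binomial theorem for \<open>q = x\<^sup>2\<close> and \<open>w = z x\<^bsup>1-2n\<^esup>\<close>: its \<open>2n\<close> factors
    \<open>1 + z x\<^bsup>2k+1-2n\<^esup>\<close> pair off symmetrically around \<open>k = n\<close>.\<close>
  define w where "w = z * x powi (1 - 2 * int n)"
  have xpowi_add: "x powi a * x powi b = x powi (a + b)" for a b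
    using x by (simp add: power_int_add)
  have shift: "z * x powi (2 * int k + 1 - 2 * int n) = (x^2)^k * w" for k
  proof -
    have "(x^2)^k = x powi (2 * int k)"
      by (metis of_nat_mult of_nat_numeral power_int_of_nat power_mult)
    then show ?thesis unfolding w_def by (simp add: xpowi_add algebra_simps)
  qed
  have "(\<Prod>i<n. (1 + z * x ^ (2*i+1)) * (1 + x ^ (2*i+1) / z))
      = x ^ (n^2) / z ^ n * (\<Prod>k<2*n. 1 + (x^2)^k * w)"
    by (simp only: prod_one_plus_odd_powers_symmetric[OF x z] shift)
  also have "\<dots> = (\<Sum>k\<le>2*n. x ^ (n^2) / z ^ n * ((x^2) ^ (k choose 2) * gauss_binomial (x^2) (2*n) k * w ^ k))"
    by (simp only: q_binomial_theorem[OF nz] sum_distrib_left)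
  also have "\<dots> = (\<Sum>k\<le>2*n. gauss_binomial (x^2) (2*n) k * x powi ((int k - int n)^2) * z powi (int k - int n))"
  proof (rule sum.cong)
    fix k
    have "x ^ (n^2) / z ^ n * ((x^2) ^ (k choose 2) * gauss_binomial (x^2) (2*n) k * w ^ k)
        = gauss_binomial (x^2) (2*n) k * (x ^ (n^2) / z ^ n * ((x^2) ^ (k choose 2) * w ^ k))"
      by (simp only: mult_ac)
    then show "x ^ (n^2) / z ^ n * ((x^2) ^ (k choose 2) * gauss_binomial (x^2) (2*n) k * w ^ k)
        = gauss_binomial (x^2) (2*n) k * x powi ((int k - int n)^2) * z powi (int k - int n)"
      unfolding w_def q_binomial_term_shift[OF x z] by (simp only: mult.assoc)
  qed simp
  also have "\<dots> = (\<Sum>j=-int n..int n. gauss_binomial (x^2) (2*n) (nat (j + int n)) * x powi (j^2) * z powi j)"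
    by (rule sum.reindex_bij_witness[where i = "\<lambda>j. nat (j + int n)" and j = "\<lambda>k. int k - int n"]) auto
  finally show ?thesis .
qed

lemma abs_summable_on_geometric_int:
  fixes r :: real
  assumes "0 \<le> r" and "r < 1"
  shows "(\<lambda>j::int. r ^ nat \<bar>j\<bar>) abs_summable_on UNIV"
proof -
  have geom: "(\<lambda>n::nat. r ^ n) abs_summable_on UNIV"
    using assms by (simp add: abs_summable_on_nat_iff')
  have "(\<lambda>j::int. r ^ nat \<bar>j\<bar>) abs_summable_on range int"
    using geom by (subst abs_summable_on_reindex_iff[symmetric]) auto
  moreover have "(\<lambda>j::int. r ^ nat \<bar>j\<bar>) abs_summable_on range (\<lambda>n. - int n)"
    using geom by (subst abs_summable_on_reindex_iff[symmetric]) (auto simp: inj_on_def)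
  moreover have "(UNIV :: int set) = range int \<union> range (\<lambda>n. - int n)"
    by (auto intro: int_cases2)
  ultimately show ?thesis by (metis abs_summable_on_union)
qed

lemma norm_power_int_le:
  fixes z :: complex
  assumes "z \<noteq> 0"
  shows "norm (z powi j) \<le> max (norm z) (inverse (norm z)) ^ nat \<bar>j\<bar>"
proof (cases "j \<ge> 0")
  case True
  then have "norm (z powi j) = norm z ^ nat \<bar>j\<bar>" by (simp add: power_int_def norm_power)
  then show ?thesis by (simp add: power_mono)
next
  case False
  then have "norm (z powi j) = inverse (norm z) ^ nat \<bar>j\<bar>"
    by (simp add: power_int_def norm_power norm_inverse power_inverse)
  then show ?thesis by (simp add: power_mono)
qed

lemma power_square_times_power_le:
  fixes r R :: real
  assumes "0 \<le> r" "r \<le> 1" "1 \<le> R" "r ^ N * R \<le> 1"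
  shows "r ^ (a * a) * R ^ a \<le> R ^ N * r ^ a"
proof (cases "a \<le> N")
  case True
  have "r ^ (a * a) \<le> r ^ a"
    using assms(1,2) by (intro power_decreasing) (auto simp: le_square)
  moreover have "R ^ a \<le> R ^ N" using True assms(3) by (intro power_increasing) auto
  ultimately have "r ^ (a * a) * R ^ a \<le> r ^ a * R ^ N" using assms(1,3) by (intro mult_mono) auto
  then show ?thesis by (simp add: mult.commute)
next
  case False
  then obtain b where a: "a = Suc (N + b)" by (metis add_Suc_right less_imp_Suc_add not_le)
  have "r ^ (a * a) * R ^ a = r ^ a * (r ^ (N + b) * R) ^ a"
    by (simp add: a power_mult_distrib power_add[symmetric] power_mult[symmetric] algebra_simps)
  also have "r ^ (N + b) * R \<le> r ^ N * R"
    using assms by (intro mult_right_mono power_decreasing) auto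
  then have "r ^ (N + b) * R \<le> 1" using assms(4) by linarith
  then have "r ^ a * (r ^ (N + b) * R) ^ a \<le> r ^ a * 1"
    using assms by (intro mult_left_mono power_le_one) auto
  also have "\<dots> \<le> R ^ N * r ^ a"
    using mult_right_mono[OF one_le_power[OF assms(3)] zero_le_power[OF assms(1)]] by simp
  finally show ?thesis .
qed

lemma abs_summable_jacobi_theta:
  fixes x z :: complex
  assumes x: "norm x < 1" and z: "z \<noteq> 0"
  shows "(\<lambda>j. x powi (j^2) * z powi j) abs_summable_on UNIV"
proof -
  define r where "r = norm x"
  define R where "R = max (norm z) (inverse (norm z))"
  have r: "0 \<le> r" "r < 1" using x by (auto simp: r_def)
  have R: "1 \<le> R"
  proof (cases "1 \<le> norm z")
    case False
    then have "1 \<le> inverse (norm z)" using z by (intro one_le_inverse) auto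
    then show ?thesis by (simp add: R_def)
  qed (simp add: R_def)
  have "(\<lambda>n. r ^ n * R) \<longlonglongrightarrow> 0 * R" using r by (intro tendsto_intros) simp
  then have "eventually (\<lambda>n. r ^ n * R < 1) sequentially"
    by (rule order_tendstoD) simp
  then obtain N where N: "r ^ N * R \<le> 1"
    unfolding eventually_sequentially by (meson less_imp_le order_refl)
  have "norm (x powi (j^2) * z powi j) \<le> R ^ N * r ^ nat \<bar>j\<bar>" for j
  proof -
    have sq: "j^2 = int (nat \<bar>j\<bar> * nat \<bar>j\<bar>)" by (simp add: power2_eq_square abs_mult_self_eq)
    have "norm (x powi (j^2)) = r ^ (nat \<bar>j\<bar> * nat \<bar>j\<bar>)"
      unfolding sq power_int_of_nat by (simp add: r_def norm_power)
    moreover have "norm (z powi j) \<le> R ^ nat \<bar>j\<bar>" unfolding R_def by (rule norm_power_int_le[OF z])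
    ultimately have "norm (x powi (j^2) * z powi j) \<le> r ^ (nat \<bar>j\<bar> * nat \<bar>j\<bar>) * R ^ nat \<bar>j\<bar>"
      by (simp add: norm_mult mult_left_mono r)
    also have "\<dots> \<le> R ^ N * r ^ nat \<bar>j\<bar>" using r R N by (intro power_square_times_power_le) auto
    finally show ?thesis .
  qed
  moreover have "(\<lambda>j::int. R ^ N * r ^ nat \<bar>j\<bar>) abs_summable_on UNIV"
    using abs_summable_on_geometric_int[OF r] by (intro abs_summable_on_cmult_right)
  ultimately show ?thesis by (rule abs_summable_on_comparison_test'[rotated])
qed

lemma infsetsum_dominated_convergence:
  fixes s :: "nat \<Rightarrow> 'a \<Rightarrow> complex"
  assumes "\<And>j. (\<lambda>n. s n j) \<longlonglongrightarrow> t j"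
    and "\<And>n j. norm (s n j) \<le> W j" and "W abs_summable_on UNIV"
  shows "(\<lambda>n. \<Sum>\<^sub>a j. s n j) \<longlonglongrightarrow> (\<Sum>\<^sub>a j. t j)"
  unfolding infsetsum_def
proof (rule integral_dominated_convergence[where w = W])
  show "integrable (count_space UNIV) W"
    using assms(3) by (simp add: abs_summable_on_def)
qed (use assms in auto)

definition jacobi_theta :: "complex \<Rightarrow> complex \<Rightarrow> complex" where
  "jacobi_theta x z = (\<Sum>\<^sub>a j. x powi (j^2) * z powi j)"

lemma jacobi_partial_product_finite_sum:
  fixes x z :: complex
  assumes x: "x \<noteq> 0" "norm x < 1" and z: "z \<noteq> 0"
  shows "(\<Prod>i<n. (1 - x ^ (2 * Suc i)) * ((1 + z * x ^ (2*i+1)) * (1 + x ^ (2*i+1) / z)))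
       = (\<Sum>j=-int n..int n.
            q_pochhammer (x^2) n * gauss_binomial (x^2) (2*n) (nat (j + int n)) * (x powi (j^2) * z powi j))"
proof -
  have "norm (x^2) < 1" using x by (simp add: norm_power power_less_one_iff)
  have "(\<Prod>i<n. 1 - x ^ (2 * Suc i)) = q_pochhammer (x^2) n"
    by (simp only: q_pochhammer_def power_mult)
  then have "(\<Prod>i<n. (1 - x ^ (2 * Suc i)) * ((1 + z * x ^ (2*i+1)) * (1 + x ^ (2*i+1) / z)))
      = q_pochhammer (x^2) n * (\<Prod>i<n. (1 + z * x ^ (2*i+1)) * (1 + x ^ (2*i+1) / z))"
    by (simp only: prod.distrib)
  also have "\<dots> = (\<Sum>j=-int n..int n.
      q_pochhammer (x^2) n * gauss_binomial (x^2) (2*n) (nat (j + int n)) * (x powi (j^2) * z powi j))"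
    using finite_jacobi_triple_product[OF x(1) z q_pochhammer_nonzero[OF \<open>norm (x^2) < 1\<close>]]
    by (simp add: sum_distrib_left mult_ac)
  finally show ?thesis .
qed

theorem jacobi_triple_product:
  fixes x z :: complex
  assumes x: "x \<noteq> 0" "norm x < 1" and z: "z \<noteq> 0"
  shows "(\<lambda>n. \<Prod>i<n. (1 - x ^ (2 * Suc i)) * ((1 + z * x ^ (2*i+1)) * (1 + x ^ (2*i+1) / z)))
           \<longlonglongrightarrow> jacobi_theta x z"
proof -
  txt \<open>The partial product is a finite sum over \<open>|j| \<le> n\<close> whose coefficients
    \<open>(q;q)\<^sub>n [2n, n+j]\<^sub>q\<close> are bounded and tend to 1, so dominated convergence applies.\<close>
  define q where "q = x^2"
  have q: "norm q < 1" using x by (simp add: q_def norm_power power_less_one_iff)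
  define t where "t j = x powi (j^2) * z powi j" for j :: int
  define s where "s n j = (if j \<in> {-int n..int n}
      then q_pochhammer q n * gauss_binomial q (2*n) (nat (j + int n)) * t j else 0)" for n j
  have partial: "(\<Prod>i<n. (1 - x ^ (2 * Suc i)) * ((1 + z * x ^ (2*i+1)) * (1 + x ^ (2*i+1) / z)))
      = (\<Sum>\<^sub>a j. s n j)" for n
  proof -
    have "(\<Sum>j=-int n..int n. q_pochhammer (x^2) n * gauss_binomial (x^2) (2*n) (nat (j + int n))
            * (x powi (j^2) * z powi j))
        = infsetsum (s n) {-int n..int n}"
      by (simp add: s_def t_def q_def)
    also have "\<dots> = (\<Sum>\<^sub>a j. s n j)"
      by (rule infsetsum_cong_neutral) (auto simp: s_def)
    finally show ?thesis unfolding jacobi_partial_product_finite_sum[OF x z] .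
  qed
  obtain K where K: "\<And>n m k. norm (q_pochhammer q n * gauss_binomial q m k) \<le> K"
    using q_pochhammer_times_gauss_binomial_bounded[OF q] by blast
  have "0 \<le> K" using K[of 0 0 0] norm_ge_zero order_trans by blast
  have "(\<lambda>n. \<Sum>\<^sub>a j. s n j) \<longlonglongrightarrow> (\<Sum>\<^sub>a j. t j)"
  proof (rule infsetsum_dominated_convergence)
    show "(\<lambda>j. K * norm (t j)) abs_summable_on UNIV"
      using abs_summable_jacobi_theta[OF x(2) z] by (auto simp: t_def)
    show "norm (s n j) \<le> K * norm (t j)" for n j
      using K[of n "2*n"] \<open>0 \<le> K\<close> by (auto simp: s_def norm_mult mult_right_mono)
    fix j :: int
    have "(\<lambda>n. q_pochhammer q n * gauss_binomial q (2*n) (nat (int n + j)) * t j) \<longlonglongrightarrow> 1 * t j"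
      by (intro tendsto_intros q_pochhammer_times_gauss_binomial_tendsto[OF q])
    moreover have "\<forall>\<^sub>F n in sequentially.
        q_pochhammer q n * gauss_binomial q (2*n) (nat (int n + j)) * t j = s n j"
      unfolding eventually_sequentially
      by (intro exI[of _ "nat \<bar>j\<bar>"]) (auto simp: s_def add.commute)
    ultimately show "(\<lambda>n. s n j) \<longlonglongrightarrow> t j" by (simp add: Lim_transform_eventually)
  qed
  then show ?thesis unfolding partial jacobi_theta_def t_def .
qed

section \<open>Theta series\<close>

definition theta_series :: "nat \<Rightarrow> nat \<Rightarrow> complex \<Rightarrow> complex" where
  "theta_series a b w = (\<Sum>\<^sub>a j. (-1) powi j * w powi (int a * j^2 - int b * j))"

definition theta_factor :: "nat \<Rightarrow> nat \<Rightarrow> complex \<Rightarrow> nat \<Rightarrow> complex" where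
  "theta_factor a b w i =
     (1 - w ^ (2*a*Suc i)) * ((1 - w ^ (a*(2*i+1) - b)) * (1 - w ^ (a*(2*i+1) + b)))"

lemma theta_series_term_eq:
  fixes w :: complex
  assumes "w \<noteq> 0"
  shows "(-1) powi j * w powi (int a * j^2 - int b * j) = (w ^ a) powi (j^2) * (- (w powi - int b)) powi j"
proof -
  have "(- (w powi - int b)) powi j = (-1) powi j * w powi (- int b * j)"
    by (metis mult_minus1 power_int_mult power_int_mult_distrib)
  moreover have "(w ^ a) powi (j^2) = w powi (int a * j^2)" by (simp add: power_int_power)
  moreover have "w powi (int a * j^2) * w powi (- int b * j) = w powi (int a * j^2 - int b * j)"
    using assms by (simp add: power_int_add[symmetric])
  ultimately show ?thesis by (simp add: mult_ac)
qed

lemma abs_summable_theta_series: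
  fixes w :: complex
  assumes "w \<noteq> 0" and "norm w < 1" and "0 < a"
  shows "(\<lambda>j. (-1) powi j * w powi (int a * j^2 - int b * j)) abs_summable_on UNIV"
  using abs_summable_jacobi_theta[of "w ^ a" "- (w powi - int b)"] assms
  by (simp add: theta_series_term_eq norm_power power_less_one_iff)

lemma theta_series_product:
  fixes w :: complex
  assumes w: "w \<noteq> 0" "norm w < 1" and ba: "b < a"
  shows "(\<lambda>n. \<Prod>i<n. theta_factor a b w i) \<longlonglongrightarrow> theta_series a b w"
proof -
  define x where "x = w ^ a"
  define z where "z = - (w powi - int b)"
  have x: "x \<noteq> 0" "norm x < 1"
    using w ba by (simp_all add: x_def norm_power power_less_one_iff)
  have z: "z \<noteq> 0" using w by (simp add: z_def)
  have "(1 - x ^ (2 * Suc i)) * ((1 + z * x ^ (2*i+1)) * (1 + x ^ (2*i+1) / z))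
      = theta_factor a b w i" for i
  proof -
    have "b \<le> a * (2*i+1)" using ba by (simp add: trans_le_add1)
    then obtain m where m: "a * (2*i+1) = b + m" using le_Suc_ex by blast
    have "x ^ (2*i+1) = w ^ (a * (2*i+1))" by (simp only: x_def power_mult)
    also have "\<dots> = w ^ b * w ^ m" by (simp only: m power_add)
    finally have "x ^ (2*i+1) = w ^ b * w ^ m" .
    moreover have "a * (2*i+1) - b = m" using m by simp
    ultimately have "z * x ^ (2*i+1) = - (w ^ (a*(2*i+1) - b))"
      using w by (simp add: z_def power_int_minus)
    moreover have "x ^ (2*i+1) / z = - (w ^ (a*(2*i+1) + b))"
      using w by (simp add: x_def z_def power_int_minus power_add divide_inverse flip: power_mult)
    moreover have "x ^ (2 * Suc i) = w ^ (2*a*Suc i)"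
      by (simp only: x_def power_mult[symmetric] mult.left_commute mult.assoc)
    ultimately show ?thesis by (simp add: theta_factor_def)
  qed
  moreover have "jacobi_theta x z = theta_series a b w"
    using w by (simp add: jacobi_theta_def theta_series_def theta_series_term_eq x_def z_def)
  ultimately show ?thesis using jacobi_triple_product[OF x z] by simp
qed

lemma theta_series_nonzero:
  fixes w :: complex
  assumes w: "w \<noteq> 0" "norm w < 1" and ba: "b < a"
  shows "theta_series a b w \<noteq> 0"
proof -
  have e: "i < 2*a*Suc i" "i < a*(2*i+1) - b" "i < a*(2*i+1) + b" for i
  proof -
    have "Suc b * (2*i+1) \<le> a * (2*i+1)" using ba by (intro mult_right_mono) auto
    then show "i < 2*a*Suc i" "i < a*(2*i+1) - b" "i < a*(2*i+1) + b"
      by (simp_all add: algebra_simps)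
  qed
  have "(\<lambda>n. \<Prod>i<n. theta_factor a b w i)
      \<longlonglongrightarrow> (\<Prod>i. 1 - w ^ (2*a*Suc i)) * ((\<Prod>i. 1 - w ^ (a*(2*i+1) - b)) * (\<Prod>i. 1 - w ^ (a*(2*i+1) + b)))"
    unfolding theta_factor_def prod.distrib
    by (intro tendsto_mult LIMSEQ_prod_lessThan_prodinf convergent_prod_one_minus_power w e)
  with theta_series_product[OF w ba] have "theta_series a b w
      = (\<Prod>i. 1 - w ^ (2*a*Suc i)) * ((\<Prod>i. 1 - w ^ (a*(2*i+1) - b)) * (\<Prod>i. 1 - w ^ (a*(2*i+1) + b)))"
    by (rule LIMSEQ_unique)
  then show ?thesis using prodinf_one_minus_power_nonzero[OF w(2) e(1)]
      prodinf_one_minus_power_nonzero[OF w(2) e(2)] prodinf_one_minus_power_nonzero[OF w(2) e(3)]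
    by simp
qed

lemma abs_summable_on_product:
  fixes f :: "'a::countable \<Rightarrow> complex" and g :: "'b::countable \<Rightarrow> complex"
  assumes f: "f abs_summable_on UNIV" and g: "g abs_summable_on UNIV"
  shows "(\<lambda>(x, y). f x * g y) abs_summable_on UNIV"
proof -
  have "(\<lambda>x. norm (f x) * (\<Sum>\<^sub>a y. norm (g y))) abs_summable_on UNIV"
    using f by (intro abs_summable_on_cmult_left) simp
  then have "(\<lambda>x. \<Sum>\<^sub>a y. norm (f x * g y)) abs_summable_on UNIV"
    using g by (simp add: norm_mult infsetsum_cmult_right)
  then show ?thesis
    using abs_summable_on_Sigma_iff[of UNIV "\<lambda>_. UNIV" "\<lambda>(x, y). f x * g y"] g
    by (simp add: abs_summable_on_cmult_right UNIV_Times_UNIV)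
qed

lemma infsetsum_product:
  fixes f :: "'a::countable \<Rightarrow> complex" and g :: "'b::countable \<Rightarrow> complex"
  assumes f: "f abs_summable_on UNIV" and g: "g abs_summable_on UNIV"
  shows "(\<Sum>\<^sub>a x. f x) * (\<Sum>\<^sub>a y. g y) = (\<Sum>\<^sub>a (x, y). f x * g y)"
proof -
  have "(\<Sum>\<^sub>a x. f x) * (\<Sum>\<^sub>a y. g y) = (\<Sum>\<^sub>a x. \<Sum>\<^sub>a y. f x * g y)"
    using f g by (simp add: infsetsum_cmult_left infsetsum_cmult_right)
  also have "\<dots> = (\<Sum>\<^sub>a (x, y). f x * g y)"
    using infsetsum_Times'[of UNIV UNIV "\<lambda>x y. f x * g y"] abs_summable_on_product[OF f g]
    by (simp add: UNIV_Times_UNIV)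
  finally show ?thesis .
qed

lemma range_sum_diff_int: "range (\<lambda>(a, b). (a + b, a - b)) = {(n, k :: int). even (n + k)}"
proof -
  have "\<exists>a b. n = a + b \<and> k = a - b" if "even (n + k)" for n k :: int
    using that by presburger
  then show ?thesis by (auto simp: image_iff)
qed

lemma range_odd_sum_diff_int: "range (\<lambda>(a, b). (1 - a - b, a - b)) = {(n, k :: int). odd (n + k)}"
proof -
  have "\<exists>a b. n = 1 - a - b \<and> k = a - b" if "odd (n + k)" for n k :: int
    using that by presburger
  then show ?thesis by (auto simp: image_iff)
qed

lemma infsetsum_int_pairs_parity_split:
  fixes F :: "int \<times> int \<Rightarrow> complex"
  assumes "F abs_summable_on UNIV"
  shows "(\<Sum>\<^sub>a p. F p) = (\<Sum>\<^sub>a (a, b). F (a + b, a - b)) + (\<Sum>\<^sub>a (a, b). F (1 - a - b, a - b))"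
proof -
  let ?E = "range (\<lambda>(a::int, b). (a + b, a - b))"
    and ?O = "range (\<lambda>(a::int, b). (1 - a - b, a - b))"
  have "infsetsum F (?E \<union> ?O) = infsetsum F ?E + infsetsum F ?O"
    using abs_summable_on_subset[OF assms subset_UNIV]
    by (intro infsetsum_Un_disjoint) (auto simp: range_sum_diff_int range_odd_sum_diff_int)
  moreover have "?E \<union> ?O = UNIV"
    unfolding range_sum_diff_int range_odd_sum_diff_int by auto
  moreover have "infsetsum F ?E = (\<Sum>\<^sub>a (a, b). F (a + b, a - b))"
    and "infsetsum F ?O = (\<Sum>\<^sub>a (a, b). F (1 - a - b, a - b))"
    by (subst infsetsum_reindex; force simp: inj_on_def case_prod_unfold)+
  ultimately show ?thesis by simp
qed

lemma theta_term_product_even: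
  fixes w :: complex and a b :: int
  assumes "w \<noteq> 0"
  shows "(-1) powi (a + b) * w powi (2 * (a + b)^2 - (a + b)) * w powi (2 * (a - b)^2)
       = (-1) powi a * w powi (4 * a^2 - a) * ((-1) powi b * w powi (4 * b^2 - b))"
proof -
  have "w powi (2 * (a + b)^2 - (a + b)) * w powi (2 * (a - b)^2)
      = w powi (2 * (a + b)^2 - (a + b) + 2 * (a - b)^2)"
    using assms by (simp add: power_int_add)
  also have "2 * (a + b)^2 - (a + b) + 2 * (a - b)^2 = (4 * a^2 - a) + (4 * b^2 - b)"
    by (simp add: power2_eq_square algebra_simps)
  finally have "w powi (2 * (a + b)^2 - (a + b)) * w powi (2 * (a - b)^2)
      = w powi (4 * a^2 - a) * w powi (4 * b^2 - b)"
    using assms by (simp add: power_int_add)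
  then show ?thesis by (simp add: power_int_add mult_ac)
qed

lemma theta_term_product_odd:
  fixes w :: complex and a b :: int
  assumes "w \<noteq> 0"
  shows "(-1) powi (1 - a - b) * w powi (2 * (1 - a - b)^2 - (1 - a - b)) * w powi (2 * (a - b)^2)
       = - w * ((-1) powi a * w powi (4 * a^2 - 3 * a) * ((-1) powi b * w powi (4 * b^2 - 3 * b)))"
proof -
  have "w powi (2 * (1 - a - b)^2 - (1 - a - b)) * w powi (2 * (a - b)^2)
      = w powi (2 * (1 - a - b)^2 - (1 - a - b) + 2 * (a - b)^2)"
    using assms by (simp add: power_int_add)
  also have "2 * (1 - a - b)^2 - (1 - a - b) + 2 * (a - b)^2 = 1 + ((4 * a^2 - 3 * a) + (4 * b^2 - 3 * b))"
    by (simp add: power2_eq_square algebra_simps)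
  finally have "w powi (2 * (1 - a - b)^2 - (1 - a - b)) * w powi (2 * (a - b)^2)
      = w * (w powi (4 * a^2 - 3 * a) * w powi (4 * b^2 - 3 * b))"
    using assms by (simp add: power_int_add)
  moreover have "(-1::complex) powi (1 - a - b) = - ((-1) powi a * (-1) powi b)"
  proof -
    have split_sign: "(-1::complex) powi (m + n) = (-1) powi m * (-1) powi n" for m n
      by (simp add: power_int_add)
    have "1 - a - b = 1 + (- a + - b)" by simp
    then have "(-1::complex) powi (1 - a - b) = (-1) powi 1 * ((-1) powi (- a) * (-1) powi (- b))"
      by (simp only: split_sign)
    then show ?thesis by (simp add: power_int_minus_one_minus)
  qed
  ultimately show ?thesis by (simp add: mult_ac)
qed

lemma theta_series_square_identity:
  fixes w :: complex
  assumes w: "w \<noteq> 0" "norm w < 1"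
  shows "theta_series 4 1 w ^ 2 - w * theta_series 4 3 w ^ 2
       = theta_series 2 1 w * (\<Sum>\<^sub>a j. w powi (2 * j^2))"
proof -
  define \<alpha> where "\<alpha> j = (-1) powi j * w powi (4 * j^2 - j)" for j :: int
  define \<beta> where "\<beta> j = (-1) powi j * w powi (4 * j^2 - 3 * j)" for j :: int
  define \<gamma> where "\<gamma> j = (-1) powi j * w powi (2 * j^2 - j)" for j :: int
  define \<phi> where "\<phi> j = w powi (2 * j^2)" for j :: int
  txt \<open>Split the double series of the right-hand side by the parity of \<open>n + k\<close>; the
    substitutions \<open>(n, k) = (a + b, a - b)\<close> and \<open>(n, k) = (1 - a - b, a - b)\<close> turn the
    two halves into the two squares on the left.\<close>
  define F where "F = (\<lambda>(n, k). \<gamma> n * \<phi> k)"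
  have \<theta>: "theta_series 4 1 w = (\<Sum>\<^sub>a j. \<alpha> j)" "theta_series 4 3 w = (\<Sum>\<^sub>a j. \<beta> j)"
    "theta_series 2 1 w = (\<Sum>\<^sub>a j. \<gamma> j)"
    by (simp_all add: theta_series_def \<alpha>_def \<beta>_def \<gamma>_def)
  have summable: "\<alpha> abs_summable_on UNIV" "\<beta> abs_summable_on UNIV" "\<gamma> abs_summable_on UNIV"
    using abs_summable_theta_series[OF w, of 4 1] abs_summable_theta_series[OF w, of 4 3]
      abs_summable_theta_series[OF w, of 2 1]
    by (simp_all add: \<alpha>_def \<beta>_def \<gamma>_def)
  moreover have "\<phi> abs_summable_on UNIV"
    using abs_summable_jacobi_theta[of "w^2" 1] w by (simp add: \<phi>_def power_int_power norm_power power_less_one_iff)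
  ultimately have F: "F abs_summable_on UNIV"
    unfolding F_def by (intro abs_summable_on_product)
  have even: "F (a + b, a - b) = \<alpha> a * \<alpha> b" for a b
    unfolding F_def \<alpha>_def \<gamma>_def \<phi>_def case_prod_conv by (rule theta_term_product_even[OF w(1)])
  have odd: "F (1 - a - b, a - b) = - w * (\<beta> a * \<beta> b)" for a b
    unfolding F_def \<beta>_def \<gamma>_def \<phi>_def case_prod_conv by (rule theta_term_product_odd[OF w(1)])
  have "theta_series 2 1 w * (\<Sum>\<^sub>a j. w powi (2 * j^2)) = (\<Sum>\<^sub>a p. F p)"
    unfolding \<theta> F_def \<phi>_def[symmetric] using summable(3) \<open>\<phi> abs_summable_on UNIV\<close>
    by (rule infsetsum_product)
  also have "\<dots> = (\<Sum>\<^sub>a (a, b). \<alpha> a * \<alpha> b) + (\<Sum>\<^sub>a (a, b). - w * (\<beta> a * \<beta> b))"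
    by (simp add: infsetsum_int_pairs_parity_split[OF F] even odd case_prod_unfold)
  also have "(\<Sum>\<^sub>a (a, b). \<alpha> a * \<alpha> b) = theta_series 4 1 w ^ 2"
    unfolding \<theta> power2_eq_square by (rule infsetsum_product[OF summable(1,1), symmetric])
  also have "(\<Sum>\<^sub>a (a, b). - w * (\<beta> a * \<beta> b)) = - w * theta_series 4 3 w ^ 2"
    unfolding \<theta> power2_eq_square infsetsum_product[OF summable(2,2)]
    using infsetsum_cmult_right[OF abs_summable_on_product[OF summable(2,2)], of "- w"]
    by (simp add: case_prod_unfold)
  finally show ?thesis by simp
qed

lemma theta_factor_2_1_block:
  fixes w :: complex
  shows "(\<Prod>r<2. theta_factor 2 1 w (2*i + r)) * (1 - w ^ (8 * Suc i))^2
       = theta_factor 4 3 w i * theta_factor 4 1 w i * (\<Prod>r<2. 1 - w ^ (4 * Suc (2*i + r)))"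
proof -
  define d where "d j = 1 - w ^ (8*i + j)" for j
  have "2*2*Suc (2*i) = 8*i + 4" "2*(2*(2*i)+1) - 1 = 8*i + 1" "2*(2*(2*i)+1) + 1 = 8*i + 3"
    "2*2*Suc (2*i+1) = 8*i + 8" "2*(2*(2*i+1)+1) - 1 = 8*i + 5" "2*(2*(2*i+1)+1) + 1 = 8*i + 7"
    "2*4*Suc i = 8*i + 8" "4*(2*i+1) - 3 = 8*i + 1" "4*(2*i+1) + 3 = 8*i + 7"
    "4*(2*i+1) - 1 = 8*i + 3" "4*(2*i+1) + 1 = 8*i + 5"
    "8 * Suc i = 8*i + 8" "4 * Suc (2*i) = 8*i + 4" "4 * Suc (2*i+1) = 8*i + 8"
    by simp_all
  then have "theta_factor 2 1 w (2*i) = d 4 * (d 1 * d 3)" "theta_factor 2 1 w (2*i+1) = d 8 * (d 5 * d 7)"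
    "theta_factor 4 3 w i = d 8 * (d 1 * d 7)" "theta_factor 4 1 w i = d 8 * (d 3 * d 5)"
    "1 - w ^ (8 * Suc i) = d 8" "1 - w ^ (4 * Suc (2*i)) = d 4" "1 - w ^ (4 * Suc (2*i+1)) = d 8"
    by (simp_all only: theta_factor_def d_def)
  then show ?thesis by (simp add: numeral_2_eq_2 power2_eq_square mult_ac)
qed

lemma theta_series_2_1_euler_products:
  fixes w :: complex
  assumes w: "w \<noteq> 0" "norm w < 1"
  shows "theta_series 2 1 w * (\<Prod>i. 1 - w ^ (8 * Suc i))^2
       = theta_series 4 3 w * theta_series 4 1 w * (\<Prod>i. 1 - w ^ (4 * Suc i))"
proof -
  have partial: "(\<Prod>i<2*m. theta_factor 2 1 w i) * (\<Prod>i<m. 1 - w ^ (8 * Suc i))^2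
      = (\<Prod>i<m. theta_factor 4 3 w i) * (\<Prod>i<m. theta_factor 4 1 w i) * (\<Prod>i<2*m. 1 - w ^ (4 * Suc i))"
    for m
    by (simp only: prod_lessThan_mult_blocks power_mult_distrib prod_power_distrib
        prod.distrib[symmetric] theta_factor_2_1_block)
  have "(\<lambda>m. (\<Prod>i<2*m. theta_factor 2 1 w i) * (\<Prod>i<m. 1 - w ^ (8 * Suc i))^2)
      \<longlonglongrightarrow> theta_series 2 1 w * (\<Prod>i. 1 - w ^ (8 * Suc i))^2"
    by (intro tendsto_mult tendsto_power LIMSEQ_prod_one_minus_power_mult
        LIMSEQ_mult_index[where k = 2] theta_series_product w) simp_all
  moreover have "(\<lambda>m. (\<Prod>i<m. theta_factor 4 3 w i) * (\<Prod>i<m. theta_factor 4 1 w i)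
      * (\<Prod>i<2*m. 1 - w ^ (4 * Suc i)))
      \<longlonglongrightarrow> theta_series 4 3 w * theta_series 4 1 w * (\<Prod>i. 1 - w ^ (4 * Suc i))"
    by (intro tendsto_mult LIMSEQ_prod_one_minus_power_mult LIMSEQ_mult_index[where k = 2]
        theta_series_product w) simp_all
  ultimately show ?thesis unfolding partial by (rule LIMSEQ_unique)
qed

section \<open>The product over the Kronecker symbol\<close>

definition kronecker8_product :: "complex \<Rightarrow> complex" where
  "kronecker8_product w = (\<Prod>n. (1 - w ^ Suc n) powi kronecker8 (Suc n))"

lemma convergent_prod_kronecker8:
  fixes w :: complex
  assumes "norm w < 1"
  shows "convergent_prod (\<lambda>n. (1 - w ^ Suc n) powi kronecker8 (Suc n))"
  by (rule convergent_prod_one_minus_power_powi[OF assms]) (simp add: kronecker8_def)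

lemma kronecker8_product_block:
  fixes w :: complex
  assumes w: "norm w < 1"
  shows "(\<Prod>r<8. (1 - w ^ Suc (8*i + r)) powi kronecker8 (Suc (8*i + r))) * theta_factor 4 1 w i
       = theta_factor 4 3 w i"
proof -
  define c where "c j = 1 - w ^ (8*i + j)" for j
  have "kronecker8 (Suc (8*i + r)) = kronecker8 (Suc r)" for r
    by (simp add: kronecker8_def)
  then have "(\<Prod>r<8. (1 - w ^ Suc (8*i + r)) powi kronecker8 (Suc (8*i + r)))
      = (\<Prod>r<8. c (Suc r) powi kronecker8 (Suc r))"
    by (simp add: c_def)
  also have "\<dots> = c 1 * inverse (c 3) * inverse (c 5) * c 7"
    by (simp add: lessThan_nat_numeral kronecker8_def power_int_minus mult_ac)
  finally have blocks: "(\<Prod>r<8. (1 - w ^ Suc (8*i + r)) powi kronecker8 (Suc (8*i + r)))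
      = c 1 * inverse (c 3) * inverse (c 5) * c 7" .
  have "c 3 \<noteq> 0" "c 5 \<noteq> 0"
    unfolding c_def by (intro one_minus_power_nonzero[OF w]; simp)+
  moreover have "2*4*Suc i = 8*i + 8" "4*(2*i+1) - 1 = 8*i + 3" "4*(2*i+1) + 1 = 8*i + 5"
    "4*(2*i+1) - 3 = 8*i + 1" "4*(2*i+1) + 3 = 8*i + 7" by simp_all
  ultimately show ?thesis
    unfolding blocks theta_factor_def by (simp only: c_def[symmetric]) (simp add: field_simps)
qed

lemma kronecker8_product_times_theta_series:
  fixes w :: complex
  assumes w: "w \<noteq> 0" "norm w < 1"
  shows "kronecker8_product w * theta_series 4 1 w = theta_series 4 3 w"
proof -
  let ?f = "\<lambda>n. (1 - w ^ Suc n) powi kronecker8 (Suc n)"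
  have "(\<lambda>m. \<Prod>n<8*m. ?f n) \<longlonglongrightarrow> kronecker8_product w"
    unfolding kronecker8_product_def
    by (intro LIMSEQ_mult_index LIMSEQ_prod_lessThan_prodinf convergent_prod_kronecker8 w) simp
  then have "(\<lambda>m. (\<Prod>n<8*m. ?f n) * (\<Prod>i<m. theta_factor 4 1 w i))
      \<longlonglongrightarrow> kronecker8_product w * theta_series 4 1 w"
    using theta_series_product[OF w, of 1 4] by (intro tendsto_mult) simp_all
  moreover have "(\<Prod>n<8*m. ?f n) * (\<Prod>i<m. theta_factor 4 1 w i) = (\<Prod>i<m. theta_factor 4 3 w i)"
    for m
    by (simp only: prod_lessThan_mult_blocks prod.distrib[symmetric] kronecker8_product_block[OF w(2)])
  ultimately have "(\<lambda>m. \<Prod>i<m. theta_factor 4 3 w i) \<longlonglongrightarrow> kronecker8_product w * theta_series 4 1 w"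
    by simp
  then show ?thesis using theta_series_product[OF w, of 3 4] by (rule LIMSEQ_unique) simp
qed

lemma kronecker8_product_nonzero:
  fixes w :: complex
  assumes "w \<noteq> 0" "norm w < 1"
  shows "kronecker8_product w \<noteq> 0"
  using kronecker8_product_times_theta_series[OF assms] theta_series_nonzero[OF assms, of 3 4] by auto

lemma kronecker8_product_mult_minus:
  fixes w :: complex
  assumes "norm w < 1"
  shows "kronecker8_product w * kronecker8_product (-w) = kronecker8_product (w^2)"
proof -
  have factor: "(1 - w ^ Suc n) powi kronecker8 (Suc n) * (1 - (-w) ^ Suc n) powi kronecker8 (Suc n)
      = (1 - (w^2) ^ Suc n) powi kronecker8 (Suc n)" for n
  proof (cases "even (Suc n)")
    case True
    then have "kronecker8 (Suc n) = 0" unfolding kronecker8_def by presburger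
    then show ?thesis by simp
  next
    case False
    then have "(-w) ^ Suc n = - (w ^ Suc n)" by (rule power_minus_odd)
    moreover have "(w^2) ^ Suc n = w ^ Suc n * w ^ Suc n"
      by (simp only: power2_eq_square power_mult_distrib)
    ultimately have "(1 - w ^ Suc n) * (1 - (-w) ^ Suc n) = 1 - (w^2) ^ Suc n"
      by (simp only:) (simp add: algebra_simps)
    then show ?thesis by (metis power_int_mult_distrib)
  qed
  have "kronecker8_product w * kronecker8_product (-w)
      = (\<Prod>n. (1 - w ^ Suc n) powi kronecker8 (Suc n) * (1 - (-w) ^ Suc n) powi kronecker8 (Suc n))"
    unfolding kronecker8_product_def using assms
    by (intro prodinf_mult convergent_prod_kronecker8) simp_all
  then show ?thesis by (simp only: factor kronecker8_product_def)
qed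

lemma kronecker8_product_reciprocal_difference:
  fixes w :: complex
  assumes w: "w \<noteq> 0" "norm w < 1"
  shows "1 / kronecker8_product w - w * kronecker8_product w
       = (\<Sum>\<^sub>a j. w powi (2 * j^2)) * (\<Prod>i. 1 - w ^ (4 * Suc i)) / (\<Prod>i. 1 - w ^ (8 * Suc i))^2"
proof -
  have A: "theta_series 4 3 w \<noteq> 0" and B: "theta_series 4 1 w \<noteq> 0"
    by (simp_all add: theta_series_nonzero w)
  have E: "(\<Prod>i. 1 - w ^ (8 * Suc i)) \<noteq> 0"
    by (intro prodinf_one_minus_power_nonzero w) simp
  have P: "kronecker8_product w = theta_series 4 3 w / theta_series 4 1 w"
    using kronecker8_product_times_theta_series[OF w] B by (simp add: field_simps)
  have "1 / kronecker8_product w - w * kronecker8_product w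
      = (theta_series 4 1 w ^ 2 - w * theta_series 4 3 w ^ 2) / (theta_series 4 3 w * theta_series 4 1 w)"
    unfolding P using A B by (simp add: field_simps power2_eq_square)
  also have "\<dots> = theta_series 2 1 w * (\<Sum>\<^sub>a j. w powi (2 * j^2)) / (theta_series 4 3 w * theta_series 4 1 w)"
    by (simp only: theta_series_square_identity[OF w])
  also have "\<dots> = (\<Sum>\<^sub>a j. w powi (2 * j^2)) * (\<Prod>i. 1 - w ^ (4 * Suc i)) / (\<Prod>i. 1 - w ^ (8 * Suc i))^2"
    using theta_series_2_1_euler_products[OF w] A B E by (simp add: field_simps)
  finally show ?thesis .
qed

section \<open>The modular equation\<close>

lemma quartic_relation:
  fixes q a b :: complex
  assumes "a \<noteq> 0" and "b \<noteq> 0" and "1 / a - q * a = 1 / b + q * b"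
  shows "(q^2 * (a * b)^2)^2 - ((q * a^2)^2 - 4 * (q * a^2) + 1) * (q^2 * (a * b)^2) + (q * a^2)^2 = 0"
proof -
  txt \<open>The quartic factors, and the hypothesis says that one factor vanishes.\<close>
  have "q * a * b * (a + b) - (b - a) = - (a * b) * ((1 / a - q * a) - (1 / b + q * b))"
    using assms(1,2) by (simp add: field_simps)
  then have "q * a * b * (a + b) - (b - a) = 0" using assms(3) by simp
  moreover have "(q^2 * (a * b)^2)^2 - ((q * a^2)^2 - 4 * (q * a^2) + 1) * (q^2 * (a * b)^2) + (q * a^2)^2
      = q^2 * a^2 * (q * a * b * (a + b) - (b - a)) * (q * a * b * (b - a) + a + b)"
    by (simp add: algebra_simps power2_eq_square)
  ultimately show ?thesis by simp
qed

lemma norm_nome_less_1: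
  assumes "0 < Im \<tau>"
  shows "norm (nome \<tau>) < 1"
  using assms by (simp add: nome_def)

lemma nome_double: "nome (2 * \<tau>) = nome \<tau> ^ 2"
  by (simp add: nome_def power2_eq_square exp_add[symmetric] algebra_simps)

lemma v_fun_eq: "v_fun \<tau> = exp (pi * \<i> * \<tau>) * kronecker8_product (nome \<tau>)"
  unfolding v_fun_def kronecker8_product_def ..

lemma v_fun_square: "v_fun \<tau> ^ 2 = nome \<tau> * kronecker8_product (nome \<tau>) ^ 2"
proof -
  have "exp (pi * \<i> * \<tau>) ^ 2 = nome \<tau>"
    by (simp add: nome_def power2_eq_square exp_add[symmetric] algebra_simps)
  then show ?thesis by (simp add: v_fun_eq power_mult_distrib)
qed

lemma v_fun_double_square:
  assumes "norm (nome \<tau>) < 1"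
  shows "v_fun (2 * \<tau>) ^ 2
       = nome \<tau> ^ 2 * (kronecker8_product (nome \<tau>) * kronecker8_product (- nome \<tau>)) ^ 2"
proof -
  have "exp (pi * \<i> * (2 * \<tau>)) = nome \<tau>" by (simp add: nome_def algebra_simps)
  then have "v_fun (2 * \<tau>) = nome \<tau> * (kronecker8_product (nome \<tau>) * kronecker8_product (- nome \<tau>))"
    unfolding v_fun_eq nome_double kronecker8_product_mult_minus[OF assms] by simp
  then show ?thesis by (simp add: power_mult_distrib)
qed

theorem proposition2:
  fixes \<tau> :: complex
  assumes "Im \<tau> > 0"
  shows "(let x = (v_fun \<tau>)^2; y = (v_fun (2 * \<tau>))^2
          in y^2 - (x^2 - 4*x + 1) * y + x^2 = 0)"
proof -
  define q where "q = nome \<tau>"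
  have q: "q \<noteq> 0" "norm q < 1" and mq: "- q \<noteq> 0" "norm (- q) < 1"
    using norm_nome_less_1[OF assms] by (simp_all add: q_def nome_def)
  have "1 / kronecker8_product q - q * kronecker8_product q
      = 1 / kronecker8_product (- q) - (- q) * kronecker8_product (- q)"
    unfolding kronecker8_product_reciprocal_difference[OF q] kronecker8_product_reciprocal_difference[OF mq]
    by (simp add: power_int_minus_left_even)
  then have "(q^2 * (kronecker8_product q * kronecker8_product (- q))^2)^2
      - ((q * kronecker8_product q ^ 2)^2 - 4 * (q * kronecker8_product q ^ 2) + 1)
        * (q^2 * (kronecker8_product q * kronecker8_product (- q))^2)
      + (q * kronecker8_product q ^ 2)^2 = 0"
    by (intro quartic_relation kronecker8_product_nonzero q mq) simp
  then show ?thesis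
    unfolding Let_def v_fun_double_square[OF q(2)[unfolded q_def]] unfolding v_fun_square q_def .
qed

end
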